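(* There exist constants $0<C_1<C_2<\infty$ such that for all sufficiently small $\delta>0$, $$C_1\,\delta|\log\delta|\le\Omega_1(\log|\sin\pi x|;\delta)\le C_2\,\delta|\log\delta|.$$ Consequently, for Lebesgue almost every $\xi$, $$\lim_{N\to\infty}\frac1N\sum_{n=1}^N\log|\sin\pi(2^n\xi-\xi)|=-\log2.$$
   Context: For $f\in L^1(\mathbb R/\mathbb Z)$ (a $1$-periodic integrable function), $\Omega_1(f;\delta)=\int_0^1|f(x+\delta)-f(x)|\,dx$ denotes its $L^1$-modulus of continuity. *)

theory Defs
  imports "HOL-Analysis.Analysis"
begin

definition omega1 :: "(real \<Rightarrow> real) \<Rightarrow> real \<Rightarrow> real" where
  "omega1 f \<delta> = (\<integral>x\<in>{0..1}. \<bar>f (x + \<delta>) - f x\<bar> \<partial>lborel)"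

text \<open>The function x \<mapsto> log |sin(pi x)| (Isabelle's ln 0 = 0 only affects a null set).\<close>
definition logsin :: "real \<Rightarrow> real" where
  "logsin x = ln \<bar>sin (pi * x)\<bar>"

end

theory Submission
  imports
    Defs
    "HOL-Library.Periodic_Fun"
    "HOL-Library.Discrete_Functions"
    "HOL-Computational_Algebra.Fundamental_Theorem_Algebra"
    "HOL-Number_Theory.Cong"
begin

text \<open>
  Write g(x) = ln |2 sin (pi x)| = logsin x + ln 2.

  Modulus of continuity: logsin has derivative pi cot (pi x), of size at most 1/x + 1/(1 - x). By the
  mean value theorem the increment |logsin (x + delta) - logsin x| is at most delta (1/x + 1/(1 - delta - x))
  away from the singularities, which integrates to 2 delta |ln delta|; on the three intervals of
  length delta next to an integer, -logsin t <= -ln t is integrated directly. Conversely, near 0 the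
  increment is at least delta/(4x), and integrating this over [delta, 1/4] gives the lower bound.

  Averages: the n-th term is g(a_n xi) - ln 2 with a_n = 2^n - 1. The product formula
  2 |sin (pi x)| = prod_{k<a} 2 |sin (pi (x + k)/a)| is the distribution relation
  sum_{k<a} g((x + k)/a) = g(x), which yields that the integral of g(a y) g(b y) over [0,1] is
  gcd(a,b)^2/(a b) times the integral of g^2. As gcd(a_k,a_l)^2/(a_k a_l) <= a_k/a_l <= 2^(k - l)
  for k <= l, a sum of N of the g(a_n xi) has second moment O(N). Chebyshev's inequality along the
  squares N = j^2 and Borel-Cantelli, with the gaps between consecutive squares controlled by sums
  of absolute values, give almost everywhere convergence of the averages of g(a_n xi) to 0.
\<close>

section \<open>Integrals of 1-periodic functions\<close>

lemma set_integral_atLeastLessThan_shift: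
  fixes F :: "real \<Rightarrow> real"
  shows "set_integrable lborel {c..<c + 1} F \<longleftrightarrow> set_integrable lborel {0..<1} (\<lambda>z. F (z + c))"
    and "(LINT z:{c..<c + 1}|lborel. F z) = (LINT z:{0..<1}|lborel. F (z + c))"
proof -
  have shift: "(\<lambda>x. indicator {c..<c + 1} (c + x) * F (c + x))
      = (\<lambda>z. indicator {0..<1} z * F (z + c))"
    by (auto simp: indicator_def add.commute)
  show "set_integrable lborel {c..<c + 1} F \<longleftrightarrow> set_integrable lborel {0..<1} (\<lambda>z. F (z + c))"
    using lborel_integrable_real_affine_iff[of 1 "\<lambda>z. indicator {c..<c + 1} z * F z" c]
    by (simp add: set_integrable_def shift)
  show "(LINT z:{c..<c + 1}|lborel. F z) = (LINT z:{0..<1}|lborel. F (z + c))"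
    using lborel_integral_real_affine[of 1 "\<lambda>z. indicator {c..<c + 1} z * F z" c]
    by (simp add: set_lebesgue_integral_def shift)
qed

lemma set_integral_atLeastLessThan_split:
  fixes F :: "real \<Rightarrow> real"
  assumes "\<And>j. j < m \<Longrightarrow> set_integrable lborel {0..<1} (\<lambda>z. F (z + c + real j))"
  shows "set_integrable lborel {c..<c + real m} F"
    and "(LINT z:{c..<c + real m}|lborel. F z) = (\<Sum>j<m. LINT z:{0..<1}|lborel. F (z + c + real j))"
proof -
  have "set_integrable lborel {c..<c + real m} F \<and>
    (LINT z:{c..<c + real m}|lborel. F z) = (\<Sum>j<m. LINT z:{0..<1}|lborel. F (z + c + real j))"
    using assms
  proof (induction m)
    case (Suc m)
    let ?I = "{c + real m..<c + real m + 1}"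
    have last: "set_integrable lborel ?I F"
      "(LINT z:?I|lborel. F z) = (LINT z:{0..<1}|lborel. F (z + c + real m))"
      using Suc.prems[of m] set_integral_atLeastLessThan_shift[of "c + real m" F]
      by (simp_all add: add.assoc)
    have split: "{c..<c + real (Suc m)} = {c..<c + real m} \<union> ?I"
      by auto
    show ?case
      using Suc last unfolding split
      by (simp add: set_integrable_Un set_integral_Un)
  qed (simp add: set_lebesgue_integral_def)
  then show "set_integrable lborel {c..<c + real m} F"
    and "(LINT z:{c..<c + real m}|lborel. F z) = (\<Sum>j<m. LINT z:{0..<1}|lborel. F (z + c + real j))"
    by auto
qed

lemma set_integrable_atLeastLessThan_piece:
  fixes F :: "real \<Rightarrow> real"
  assumes "set_integrable lborel {c..<c + real m} F" "j < m"
  shows "set_integrable lborel {0..<1} (\<lambda>z. F (z + c + real j))"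
proof -
  have "set_integrable lborel {c + real j..<c + real j + 1} F"
    using assms by (intro set_integrable_subset[OF assms(1)]) auto
  then show ?thesis
    using set_integral_atLeastLessThan_shift(1)[of "c + real j" F] by (simp add: add.assoc)
qed

lemma set_integral_atLeastLessThan_scale:
  fixes H :: "real \<Rightarrow> real"
  assumes "m > 0"
  shows "set_integrable lborel {0..<1} (\<lambda>y. H (real m * y)) \<longleftrightarrow> set_integrable lborel {0..<real m} H"
    and "(LINT y:{0..<1}|lborel. H (real m * y)) = (LINT z:{0..<real m}|lborel. H z) / real m"
proof -
  have scale: "(\<lambda>x. indicator {0..<real m} (real m * x) * H (real m * x))
      = (\<lambda>y. indicator {0..<1} y * H (real m * y))"
    using assms by (auto simp: indicator_def fun_eq_iff zero_le_mult_iff)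
  have "real m \<noteq> 0"
    using assms by simp
  from lborel_integrable_real_affine_iff[OF this, of "\<lambda>z. indicator {0..<real m} z * H z" 0]
    lborel_integral_real_affine[OF this, of "\<lambda>z. indicator {0..<real m} z * H z" 0]
  show "set_integrable lborel {0..<1} (\<lambda>y. H (real m * y)) \<longleftrightarrow> set_integrable lborel {0..<real m} H"
    and "(LINT y:{0..<1}|lborel. H (real m * y)) = (LINT z:{0..<real m}|lborel. H z) / real m"
    using \<open>real m \<noteq> 0\<close>
    by (simp_all add: set_integrable_def set_lebesgue_integral_def scale)
qed

lemma periodic_set_integral_atLeastLessThan:
  fixes H :: "real \<Rightarrow> real"
  assumes "periodic_fun_simple' H" "set_integrable lborel {0..<1} H"
  shows "set_integrable lborel {0..<real m} H"
    and "(LINT z:{0..<real m}|lborel. H z) = real m * (LINT z:{0..<1}|lborel. H z)"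
proof -
  interpret periodic_fun_simple' H
    by fact
  show "set_integrable lborel {0..<real m} H"
    and "(LINT z:{0..<real m}|lborel. H z) = real m * (LINT z:{0..<1}|lborel. H z)"
    using set_integral_atLeastLessThan_split[of m H 0] assms(2) by (simp_all add: plus_of_nat)
qed

lemma periodic_set_integral_scale:
  fixes H :: "real \<Rightarrow> real"
  assumes "periodic_fun_simple' H" "set_integrable lborel {0..<1} H" "m > 0"
  shows "set_integrable lborel {0..<1} (\<lambda>y. H (real m * y))"
    and "(LINT y:{0..<1}|lborel. H (real m * y)) = (LINT z:{0..<1}|lborel. H z)"
  using periodic_set_integral_atLeastLessThan[OF assms(1,2), of m]
    set_integral_atLeastLessThan_scale[OF assms(3), of H] assms(3)
  by simp_all

lemma periodic_set_integral_mult_scale: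
  fixes h k :: "real \<Rightarrow> real"
  assumes "periodic_fun_simple' h" "m > 0"
    and "set_integrable lborel {0..<1} (\<lambda>y. h (real m * y) * k y)"
  shows "set_integrable lborel {0..<1} (\<lambda>z. h z * (\<Sum>j<m. k ((z + real j) / real m)))"
    and "(LINT y:{0..<1}|lborel. h (real m * y) * k y)
           = (LINT z:{0..<1}|lborel. h z * (\<Sum>j<m. k ((z + real j) / real m))) / real m"
proof -
  interpret periodic_fun_simple' h
    by fact
  define F where "F z = h z * k (z / real m)" for z
  have F_scale: "(\<lambda>y. F (real m * y)) = (\<lambda>y. h (real m * y) * k y)"
    using assms(2) by (simp add: F_def)
  have F_shift: "F (z + real j) = h z * k ((z + real j) / real m)" for z j
    using plus_of_nat by (simp add: F_def add_divide_distrib)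
  have "set_integrable lborel {0..<0 + real m} F"
    using set_integral_atLeastLessThan_scale(1)[OF assms(2), of F] assms(3) by (simp add: F_scale)
  then have pieces: "set_integrable lborel {0..<1} (\<lambda>z. h z * k ((z + real j) / real m))" if "j < m" for j
    using set_integrable_atLeastLessThan_piece[of 0 m F j] that by (simp add: F_shift)
  have sum_eq: "indicator {0..<1} z * (h z * (\<Sum>j<m. k ((z + real j) / real m)))
      = (\<Sum>j<m. indicator {0..<1} z * (h z * k ((z + real j) / real m)))" for z :: real
    by (simp add: sum_distrib_left)
  have "integrable lborel (\<lambda>z. \<Sum>j<m. indicator {0..<1} z * (h z * k ((z + real j) / real m)))"
    using pieces by (intro Bochner_Integration.integrable_sum) (auto simp: set_integrable_def)
  then show "set_integrable lborel {0..<1} (\<lambda>z. h z * (\<Sum>j<m. k ((z + real j) / real m)))"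
    by (simp add: set_integrable_def sum_eq)
  have "(LINT y:{0..<1}|lborel. h (real m * y) * k y) = (LINT z:{0..<real m}|lborel. F z) / real m"
    using set_integral_atLeastLessThan_scale(2)[OF assms(2), of F] by (simp add: F_scale)
  also have "(LINT z:{0..<real m}|lborel. F z)
      = (\<Sum>j<m. LINT z:{0..<1}|lborel. h z * k ((z + real j) / real m))"
    using set_integral_atLeastLessThan_split(2)[of m F 0] pieces by (simp add: F_shift)
  also have "\<dots> = (LINT z:{0..<1}|lborel. h z * (\<Sum>j<m. k ((z + real j) / real m)))"
    using pieces unfolding set_lebesgue_integral_def set_integrable_def
    by (simp only: scaleR_conv_of_real of_real_eq_id id_apply sum_eq)
      (rule Bochner_Integration.integral_sum[symmetric], simp)
  finally show "(LINT y:{0..<1}|lborel. h (real m * y) * k y)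
           = (LINT z:{0..<1}|lborel. h z * (\<Sum>j<m. k ((z + real j) / real m))) / real m" .
qed

lemma AE_lborel_of_periodic:
  fixes P :: "real \<Rightarrow> bool"
  assumes periodic: "\<And>x. P (x + 1) \<longleftrightarrow> P x" and unit: "AE x in lborel. x \<in> {0..<1} \<longrightarrow> P x"
  shows "AE x in lborel. P x"
proof -
  interpret periodic_fun_simple' P
    by standard (simp add: periodic)
  obtain N where N: "N \<in> null_sets lborel" "{x. \<not> (x \<in> {0..<1} \<longrightarrow> P x)} \<subseteq> N"
    using unit unfolding eventually_ae_filter by auto
  have "AE x in lborel. x \<in> {of_int k..<of_int k + 1} \<longrightarrow> P x" for k :: int
  proof (rule AE_I')
    show "{x. x - of_int k \<in> N} \<in> null_sets lborel"
      using N(1) by (rule null_sets_translation)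
    show "{x \<in> space lborel. \<not> (x \<in> {of_int k..<of_int k + 1} \<longrightarrow> P x)} \<subseteq> {x. x - of_int k \<in> N}"
    proof (intro subsetI CollectI)
      fix x
      assume "x \<in> {x \<in> space lborel. \<not> (x \<in> {of_int k..<of_int k + 1} \<longrightarrow> P x)}"
      then have "x - of_int k \<in> {0..<1}" "\<not> P (x - of_int k)"
        using minus_of_int[of x k] by auto
      then show "x - of_int k \<in> N"
        using N(2) by auto
    qed
  qed
  then have "AE x in lborel. \<forall>k\<in>(UNIV :: int set). x \<in> {of_int k..<of_int k + 1} \<longrightarrow> P x"
    by (subst AE_ball_countable) auto
  then show ?thesis
  proof (rule AE_mp, intro AE_I2 impI)
    fix x :: real
    assume "\<forall>k\<in>(UNIV :: int set). x \<in> {of_int k..<of_int k + 1} \<longrightarrow> P x"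
    moreover have "x \<in> {of_int \<lfloor>x\<rfloor>..<of_int \<lfloor>x\<rfloor> + 1}"
      by auto
    ultimately show "P x"
      by blast
  qed
qed

lemma restrict_space_unit_interval:
  fixes f :: "real \<Rightarrow> real" and P :: "real \<Rightarrow> bool"
  shows "integrable (restrict_space lborel {0..<1}) f \<longleftrightarrow> set_integrable lborel {0..<1} f"
    and "(\<integral>x. f x \<partial>restrict_space lborel {0..<1}) = (LINT x:{0..<1}|lborel. f x)"
    and "(AE x in restrict_space lborel {0..<1}. P x) \<longleftrightarrow> (AE x in lborel. x \<in> {0..<1} \<longrightarrow> P x)"
  by (simp_all add: integrable_restrict_space integral_restrict_space set_integrable_def
      set_lebesgue_integral_def) (subst AE_restrict_space_iff; simp)

section \<open>Elementary estimates for logsin\<close>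

interpretation logsin: periodic_fun_simple' logsin
proof
  fix x :: real
  have "sin (pi * (x + 1)) = - sin (pi * x)"
    by (simp add: distrib_left sin_add)
  then show "logsin (x + 1) = logsin x"
    by (simp add: logsin_def)
qed

lemma logsin_one_minus: "logsin (1 - x) = logsin x"
  using logsin.plus_1[of "- x"] by (simp add: logsin_def)

lemma logsin_nonpos: "logsin x \<le> 0"
  by (cases "sin (pi * x) = 0") (auto simp: logsin_def)

lemma borel_measurable_logsin [measurable]: "logsin \<in> borel_measurable borel"
  unfolding logsin_def by measurable

lemma logsin_eq_ln_sin: "0 < x \<Longrightarrow> x < 1 \<Longrightarrow> logsin x = ln (sin (pi * x))"
  using sin_gt_zero[of "pi * x"] by (simp add: logsin_def)

lemma mult_cos_le_sin:
  assumes "0 \<le> u" "u \<le> pi / 2"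
  shows "u * cos u \<le> sin u"
proof (cases "u = pi / 2")
  case False
  with assms have u: "\<bar>u\<bar> < pi / 2" "0 < cos u"
    by (auto intro: cos_gt_zero_pi)
  have "u \<le> \<bar>tan u\<bar>"
    using abs_tan_ge[OF u(1)] assms by simp
  also have "\<bar>tan u\<bar> = sin u / cos u"
    using assms u sin_ge_zero[of u] by (simp add: tan_def)
  finally show ?thesis
    using u by (simp add: field_simps)
next
  case True
  then show ?thesis
    by (simp only: cos_pi_half sin_pi_half)
qed

lemma self_le_sin_pi:
  assumes "0 \<le> y" "y \<le> 1 / 2"
  shows "y \<le> sin (pi * y)"
proof (cases "y \<le> 1 / 3")
  case True
  have "1 / 2 \<le> cos (pi * y)"
    using cos_monotone_0_pi_le[of "pi * y" "pi / 3"] True assms by (simp add: cos_60)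
  then have "pi * y * (1 / 2) \<le> pi * y * cos (pi * y)"
    using assms by (intro mult_left_mono) auto
  also have "\<dots> \<le> sin (pi * y)"
    using assms by (intro mult_cos_le_sin) auto
  finally have "pi * y * (1 / 2) \<le> sin (pi * y)" .
  moreover have "2 * y \<le> pi * y"
    using pi_gt3 assms by (intro mult_right_mono) auto
  ultimately show ?thesis
    by linarith
next
  case False
  have "sin (pi / 3) \<le> sin (pi * y)"
    using False assms by (intro sin_monotone_2pi_le) (auto simp: field_simps)
  moreover have "1 / 2 \<le> sin (pi / 3)"
    by (simp add: sin_60 real_le_rsqrt)
  ultimately show ?thesis
    using assms by linarith
qed

lemma neg_logsin_le_neg_ln:
  assumes "0 < y" "y \<le> 1 / 2"
  shows "- logsin y \<le> - ln y"
  using self_le_sin_pi[of y] assms by (simp add: logsin_eq_ln_sin)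

lemma logsin_has_real_derivative:
  assumes "0 < x" "x < 1"
  shows "(logsin has_real_derivative pi * cot (pi * x)) (at x)"
proof (rule has_field_derivative_transform_within_open)
  show "((\<lambda>x. ln (sin (pi * x))) has_real_derivative pi * cot (pi * x)) (at x)"
    using sin_gt_zero[of "pi * x"] assms
    by (auto intro!: derivative_eq_intros simp: cot_def field_simps)
  show "open {0<..<1::real}" "x \<in> {0<..<1}"
    using assms by auto
qed (simp add: logsin_eq_ln_sin)

lemma logsin_diff_mean_value:
  assumes "0 < x" "x < y" "y < 1"
  obtains z where "x < z" "z < y" "logsin y - logsin x = (y - x) * (pi * cot (pi * z))"
proof -
  have "(logsin has_real_derivative pi * cot (pi * u)) (at u)" if "x \<le> u" "u \<le> y" for u
    using assms that by (intro logsin_has_real_derivative) auto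
  from MVT2[OF \<open>x < y\<close> this] that show ?thesis
    by auto
qed

lemma cot_nonneg_le_inverse:
  assumes "0 < u" "u \<le> pi / 2"
  shows "0 \<le> cot u" "cot u \<le> 1 / u"
proof -
  have "0 < sin u" "0 \<le> cos u"
    using assms by (auto intro: sin_gt_zero cos_ge_zero)
  with mult_cos_le_sin[of u] assms show "0 \<le> cot u" "cot u \<le> 1 / u"
    by (auto simp: cot_def field_simps)
qed

lemma abs_pi_cot_pi_le:
  assumes "0 < t" "t < 1"
  shows "\<bar>pi * cot (pi * t)\<bar> \<le> 1 / t + 1 / (1 - t)"
proof -
  have bound: "\<bar>pi * cot (pi * s)\<bar> \<le> 1 / s" if "0 < s" "s \<le> 1 / 2" for s
    using cot_nonneg_le_inverse[of "pi * s"] that by (auto simp: field_simps)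
  show ?thesis
  proof (cases "t \<le> 1 / 2")
    case True
    moreover have "0 \<le> 1 / (1 - t)"
      using assms by simp
    ultimately show ?thesis
      using bound[of t] assms by linarith
  next
    case False
    have "\<bar>pi * cot (pi * t)\<bar> = \<bar>pi * cot (pi * (1 - t))\<bar>"
      by (simp add: cot_def right_diff_distrib sin_diff cos_diff abs_mult)
    moreover have "0 \<le> 1 / t"
      using assms by simp
    ultimately show ?thesis
      using bound[of "1 - t"] False assms by linarith
  qed
qed

lemma inverse_le_pi_cot_pi:
  assumes "0 < t" "t \<le> 1 / 3"
  shows "1 / (2 * t) \<le> pi * cot (pi * t)"
proof -
  have "1 / 2 \<le> cos (pi * t)"
    using cos_monotone_0_pi_le[of "pi * t" "pi / 3"] assms by (simp add: cos_60)
  moreover have "0 < sin (pi * t)" "sin (pi * t) \<le> pi * t"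
    using assms by (auto intro!: sin_gt_zero sin_x_le_x)
  ultimately have "pi * (1 / 2) / (pi * t) \<le> pi * cos (pi * t) / sin (pi * t)"
    using assms by (intro frac_le) auto
  then show ?thesis
    by (simp add: cot_def)
qed

lemma ln_squared_le_powr:
  fixes y :: real
  assumes "0 < y" "y \<le> 1"
  shows "(ln y)\<^sup>2 \<le> 16 * y powr (-1/2)"
proof -
  have "ln (y powr (-1/4)) \<le> y powr (-1/4) - 1"
    using assms by (intro ln_le_minus_one) auto
  then have "- ln y \<le> 4 * y powr (-1/4)"
    using assms by (simp add: ln_powr)
  moreover have "0 \<le> - ln y"
    using assms by simp
  ultimately have "(- ln y)\<^sup>2 \<le> (4 * y powr (-1/4))\<^sup>2"
    by (rule power_mono)
  also have "\<dots> = 16 * y powr (-1/2)"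
    using assms by (simp add: power_mult_distrib power2_eq_square powr_add[symmetric])
  finally show ?thesis
    by simp
qed

lemma logsin_squared_le:
  assumes "0 < x" "x < 1"
  shows "(logsin x)\<^sup>2 \<le> 16 * (x powr (-1/2) + (1 - x) powr (-1/2))"
proof -
  have "(logsin x)\<^sup>2 \<le> 16 * y powr (-1/2)" if "logsin x = logsin y" "0 < y" "y \<le> 1/2" for y
  proof -
    have "(- logsin y)\<^sup>2 \<le> (- ln y)\<^sup>2"
      using neg_logsin_le_neg_ln[of y] logsin_nonpos[of y] that by (intro power_mono) auto
    also have "\<dots> \<le> 16 * y powr (-1/2)"
      using that ln_squared_le_powr[of y] by simp
    finally show ?thesis
      using that by simp
  qed
  from this[of x] this[of "1 - x"] assms show ?thesis
    by (cases "x \<le> 1/2") (auto simp: logsin_one_minus intro: order_trans)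
qed

lemma set_integrable_logsin_squared: "set_integrable lborel {0..<1} (\<lambda>x. (logsin x)\<^sup>2)"
proof -
  \<comment> \<open>the Beta integrands for (1/2, 1) and (1, 1/2), equal to t powr (-1/2) and (1 - t) powr (-1/2) on (0,1)\<close>
  define D where "D t = 16 * (t powr (1/2 - 1) * (1 - t) powr (1 - 1) + t powr (1 - 1) * (1 - t) powr (1/2 - 1))"
    for t :: real
  have "set_integrable lborel {0..1} (\<lambda>t. t powr (1/2 - 1) * (1 - t) powr (1 - 1::real))"
    and "set_integrable lborel {0..1} (\<lambda>t. t powr (1 - 1) * (1 - t) powr (1/2 - 1::real))"
    by (rule integrable_Beta; simp)+
  then have "set_integrable lborel {0..1} D"
    unfolding D_def by (intro set_integrable_mult_right set_integral_add) auto
  then have "set_integrable lborel {0..<1} D"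
    by (rule set_integrable_subset) auto
  then show ?thesis
  proof (rule set_integrable_bound)
    show "set_borel_measurable lborel {0..<1} (\<lambda>x. (logsin x)\<^sup>2)"
      unfolding set_borel_measurable_def by measurable
    show "AE x in lborel. x \<in> {0..<1} \<longrightarrow> norm ((logsin x)\<^sup>2) \<le> norm (D x)"
    proof (intro AE_I2 impI)
      fix x :: real
      assume "x \<in> {0..<1}"
      then consider "x = 0" | "0 < x" "x < 1"
        by fastforce
      then show "norm ((logsin x)\<^sup>2) \<le> norm (D x)"
        by cases (use logsin_squared_le[of x] in \<open>auto simp: logsin_def D_def\<close>)
    qed
  qed
qed

lemma set_integrable_logsin: "set_integrable lborel {0..<1} logsin"
proof (rule set_integrable_bound)
  show "set_integrable lborel {0..<1} (\<lambda>x. (logsin x)\<^sup>2 + 1)"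
    using set_integrable_logsin_squared
    by (intro set_integral_add) (auto simp: set_integrable_def intro: integrable_real_indicator)
  show "set_borel_measurable lborel {0..<1} logsin"
    unfolding set_borel_measurable_def by measurable
  have "\<bar>u\<bar> \<le> u\<^sup>2 + 1" for u :: real
    using zero_le_power2[of "\<bar>u\<bar> - 1"] by (simp add: power2_diff)
  then show "AE x in lborel. x \<in> {0..<1} \<longrightarrow> norm (logsin x) \<le> norm ((logsin x)\<^sup>2 + 1)"
    by (intro AE_I2) (simp add: add_nonneg_nonneg)
qed

section \<open>The modulus of continuity of logsin\<close>

lemma omega1_logsin_eq_integral:
  assumes "0 < \<delta>" "\<delta> < 1"
  shows "(\<lambda>x. \<bar>logsin (x + \<delta>) - logsin x\<bar>) integrable_on {0..1}"
    and "omega1 logsin \<delta> = integral {0..1} (\<lambda>x. \<bar>logsin (x + \<delta>) - logsin x\<bar>)"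
proof -
  have on_0_2: "set_integrable lborel {0..<real 2} logsin"
    by (rule periodic_set_integral_atLeastLessThan(1)[OF _ set_integrable_logsin]) unfold_locales
  have "integrable lborel (\<lambda>x. indicator {0..<2} (\<delta> + 1 * x) *\<^sub>R logsin (\<delta> + 1 * x))"
    using on_0_2 by (intro lborel_integrable_real_affine) (simp_all add: set_integrable_def)
  then have "set_integrable lborel {0..1} (\<lambda>x. indicator {0..<2} (x + \<delta>) * logsin (x + \<delta>))"
    unfolding set_integrable_def by (intro integrable_mult_indicator) (simp_all add: add.commute)
  moreover have "set_integrable lborel {0..1} (\<lambda>x. indicator {0..<2} (x + \<delta>) * logsin (x + \<delta>))
      = set_integrable lborel {0..1} (\<lambda>x. logsin (x + \<delta>))"
    using assms by (intro set_integrable_cong) (auto simp: indicator_def)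
  moreover have "set_integrable lborel {0..1} logsin"
    using on_0_2 by (rule set_integrable_subset) auto
  ultimately have "set_integrable lborel {0..1} (\<lambda>x. \<bar>logsin (x + \<delta>) - logsin x\<bar>)"
    by (intro set_integrable_abs set_integral_diff) auto
  from set_borel_integral_eq_integral[OF this]
  show "(\<lambda>x. \<bar>logsin (x + \<delta>) - logsin x\<bar>) integrable_on {0..1}"
    and "omega1 logsin \<delta> = integral {0..1} (\<lambda>x. \<bar>logsin (x + \<delta>) - logsin x\<bar>)"
    by (simp_all add: omega1_def)
qed

lemma has_integral_real_derivative_interior:
  fixes G g :: "real \<Rightarrow> real"
  assumes "a \<le> b" "continuous_on {a..b} G"
    and "\<And>x. a < x \<Longrightarrow> x < b \<Longrightarrow> (G has_real_derivative g x) (at x)"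
  shows "(g has_integral (G b - G a)) {a..b}"
  using assms by (intro fundamental_theorem_of_calculus_interior)
    (auto simp: has_real_derivative_iff_has_vector_derivative)

lemma ln_le_two_sqrt: "0 < y \<Longrightarrow> ln y \<le> 2 * sqrt y"
  using ln_le_minus_one[of "sqrt y"] by (simp add: ln_sqrt)

lemma neg_logsin_le_near_zero:
  assumes "0 \<le> t" "t \<le> \<delta>" "\<delta> \<le> 1/2"
  shows "- logsin t \<le> - ln \<delta> + 2 * sqrt \<delta> / sqrt t"
proof (cases "t = 0")
  case False
  with assms have "- logsin t \<le> - ln \<delta> + ln (\<delta> / t)"
    using neg_logsin_le_neg_ln[of t] by (simp add: ln_div)
  also have "ln (\<delta> / t) \<le> 2 * sqrt \<delta> / sqrt t"
    using False assms ln_le_two_sqrt[of "\<delta> / t"] by (simp add: real_sqrt_divide)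
  finally show ?thesis
    by simp
qed (use assms in \<open>cases "\<delta> = 0"; simp add: logsin_def\<close>)

lemma neg_logsin_le_away_from_zero:
  assumes "0 < \<delta>" "\<delta> \<le> t" "t \<le> 1/2"
  shows "- logsin t \<le> - ln \<delta>"
proof -
  have "ln \<delta> \<le> ln t"
    using assms by simp
  moreover have "- logsin t \<le> - ln t"
    using assms by (intro neg_logsin_le_neg_ln) auto
  ultimately show ?thesis
    by linarith
qed

lemma abs_logsin_diff_le: "\<bar>logsin y - logsin x\<bar> \<le> - logsin y - logsin x"
  using logsin_nonpos[of x] logsin_nonpos[of y] by linarith

lemma abs_logsin_diff_integrable_on:
  assumes "0 < \<delta>" "\<delta> < 1" "0 \<le> a" "b \<le> 1"
  shows "(\<lambda>x. \<bar>logsin (x + \<delta>) - logsin x\<bar>) integrable_on {a..b}"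
  using omega1_logsin_eq_integral(1)[OF assms(1,2)] by (rule integrable_on_subinterval) (use assms in auto)

lemma integral_abs_logsin_diff_near_zero_le:
  assumes "0 < \<delta>" "\<delta> \<le> 1/16"
  shows "integral {0..\<delta>} (\<lambda>x. \<bar>logsin (x + \<delta>) - logsin x\<bar>) \<le> 2 * \<delta> * - ln \<delta> + 4 * \<delta>"
proof -
  define L where "L = - ln \<delta>"
  have bound: "((\<lambda>x. 2 * L + 2 * sqrt \<delta> / sqrt x) has_integral (2 * L * \<delta> + 4 * \<delta>)) {0..\<delta>}"
    using assms
    by (intro has_integral_eq_rhs[OF has_integral_real_derivative_interior[where
          G = "\<lambda>x. 2 * L * x + 4 * (sqrt \<delta> * sqrt x)"]])
      (auto intro!: derivative_eq_intros continuous_intros simp: field_simps)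
  have "(\<lambda>x. \<bar>logsin (x + \<delta>) - logsin x\<bar>) integrable_on {0..\<delta>}"
    using assms by (intro abs_logsin_diff_integrable_on) auto
  then have "integral {0..\<delta>} (\<lambda>x. \<bar>logsin (x + \<delta>) - logsin x\<bar>) \<le> 2 * L * \<delta> + 4 * \<delta>"
    using bound
  proof (rule has_integral_le[OF integrable_integral])
    fix x
    assume x: "x \<in> {0..\<delta>}"
    have "- logsin x \<le> L + 2 * sqrt \<delta> / sqrt x"
      using neg_logsin_le_near_zero[of x \<delta>] x assms by (simp add: L_def)
    moreover have "- logsin (x + \<delta>) \<le> L"
      using neg_logsin_le_away_from_zero[of \<delta> "x + \<delta>"] x assms by (simp add: L_def)
    ultimately show "\<bar>logsin (x + \<delta>) - logsin x\<bar> \<le> 2 * L + 2 * sqrt \<delta> / sqrt x"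
      using abs_logsin_diff_le[of "x + \<delta>" x] by linarith
  qed
  then show ?thesis
    by (simp add: L_def algebra_simps)
qed

lemma integral_abs_logsin_diff_middle_le:
  assumes "0 < \<delta>" "\<delta> \<le> 1/16"
  shows "integral {\<delta>..1 - 2 * \<delta>} (\<lambda>x. \<bar>logsin (x + \<delta>) - logsin x\<bar>) \<le> 2 * \<delta> * - ln \<delta>"
proof -
  have bound: "((\<lambda>x. \<delta> * (1 / x + 1 / (1 - \<delta> - x))) has_integral
      (2 * \<delta> * ln (1 - 2 * \<delta>) - 2 * \<delta> * ln \<delta>)) {\<delta>..1 - 2 * \<delta>}"
    using assms
    by (intro has_integral_eq_rhs[OF has_integral_real_derivative_interior[where
          G = "\<lambda>x. \<delta> * (ln x - ln (1 - \<delta> - x))"]])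
      (auto intro!: derivative_eq_intros continuous_intros simp: field_simps)
  have "(\<lambda>x. \<bar>logsin (x + \<delta>) - logsin x\<bar>) integrable_on {\<delta>..1 - 2 * \<delta>}"
    using assms by (intro abs_logsin_diff_integrable_on) auto
  then have "integral {\<delta>..1 - 2 * \<delta>} (\<lambda>x. \<bar>logsin (x + \<delta>) - logsin x\<bar>)
      \<le> 2 * \<delta> * ln (1 - 2 * \<delta>) - 2 * \<delta> * ln \<delta>"
    using bound
  proof (rule has_integral_le[OF integrable_integral])
    fix x
    assume x: "x \<in> {\<delta>..1 - 2 * \<delta>}"
    obtain z where z: "x < z" "z < x + \<delta>"
      and diff: "logsin (x + \<delta>) - logsin x = \<delta> * (pi * cot (pi * z))"
      using logsin_diff_mean_value[of x "x + \<delta>"] x assms by auto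
    have "\<bar>pi * cot (pi * z)\<bar> \<le> 1 / z + 1 / (1 - z)"
      using z x assms by (intro abs_pi_cot_pi_le) auto
    also have "\<dots> \<le> 1 / x + 1 / (1 - \<delta> - x)"
      using z x assms by (intro add_mono divide_left_mono) auto
    finally show "\<bar>logsin (x + \<delta>) - logsin x\<bar> \<le> \<delta> * (1 / x + 1 / (1 - \<delta> - x))"
      using assms by (simp add: diff abs_mult mult_left_mono)
  qed
  moreover have "2 * \<delta> * ln (1 - 2 * \<delta>) \<le> 0"
    using assms by (intro mult_nonneg_nonpos) auto
  ultimately show ?thesis
    by linarith
qed

lemma integral_abs_logsin_diff_before_one_le:
  assumes "0 < \<delta>" "\<delta> \<le> 1/16"
  shows "integral {1 - 2 * \<delta>..1 - \<delta>} (\<lambda>x. \<bar>logsin (x + \<delta>) - logsin x\<bar>) \<le> 2 * \<delta> * - ln \<delta> + 4 * \<delta>"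
proof -
  define L where "L = - ln \<delta>"
  have bound: "((\<lambda>x. 2 * L + 2 * sqrt \<delta> / sqrt (1 - \<delta> - x)) has_integral (2 * L * \<delta> + 4 * \<delta>))
      {1 - 2 * \<delta>..1 - \<delta>}"
    using assms
    by (intro has_integral_eq_rhs[OF has_integral_real_derivative_interior[where
          G = "\<lambda>x. 2 * L * x - 4 * (sqrt \<delta> * sqrt (1 - \<delta> - x))"]])
      (auto intro!: derivative_eq_intros continuous_intros simp: field_simps)
  have "(\<lambda>x. \<bar>logsin (x + \<delta>) - logsin x\<bar>) integrable_on {1 - 2 * \<delta>..1 - \<delta>}"
    using assms by (intro abs_logsin_diff_integrable_on) auto
  then have "integral {1 - 2 * \<delta>..1 - \<delta>} (\<lambda>x. \<bar>logsin (x + \<delta>) - logsin x\<bar>) \<le> 2 * L * \<delta> + 4 * \<delta>"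
    using bound
  proof (rule has_integral_le[OF integrable_integral])
    fix x
    assume x: "x \<in> {1 - 2 * \<delta>..1 - \<delta>}"
    have "- logsin x \<le> L"
      using neg_logsin_le_away_from_zero[of \<delta> "1 - x"] x assms by (simp add: L_def logsin_one_minus)
    moreover have "- logsin (x + \<delta>) \<le> L + 2 * sqrt \<delta> / sqrt (1 - \<delta> - x)"
      using neg_logsin_le_near_zero[of "1 - \<delta> - x" \<delta>] logsin_one_minus[of "x + \<delta>"] x assms
      by (simp add: L_def algebra_simps)
    ultimately show "\<bar>logsin (x + \<delta>) - logsin x\<bar> \<le> 2 * L + 2 * sqrt \<delta> / sqrt (1 - \<delta> - x)"
      using abs_logsin_diff_le[of "x + \<delta>" x] by linarith
  qed
  then show ?thesis
    by (simp add: L_def algebra_simps)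
qed

lemma integral_abs_logsin_diff_near_one_le:
  assumes "0 < \<delta>" "\<delta> \<le> 1/16"
  shows "integral {1 - \<delta>..1} (\<lambda>x. \<bar>logsin (x + \<delta>) - logsin x\<bar>) \<le> 2 * \<delta> * - ln \<delta> + 8 * \<delta>"
proof -
  define L where "L = - ln \<delta>"
  have bound: "((\<lambda>x. 2 * L + 2 * sqrt \<delta> / sqrt (1 - x) + 2 * sqrt \<delta> / sqrt (x - (1 - \<delta>)))
      has_integral (2 * L * \<delta> + 8 * \<delta>)) {1 - \<delta>..1}"
    using assms
    by (intro has_integral_eq_rhs[OF has_integral_real_derivative_interior[where
          G = "\<lambda>x. 2 * L * x - 4 * (sqrt \<delta> * sqrt (1 - x)) + 4 * (sqrt \<delta> * sqrt (x - (1 - \<delta>)))"]])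
      (auto intro!: derivative_eq_intros continuous_intros simp: field_simps)
  have "(\<lambda>x. \<bar>logsin (x + \<delta>) - logsin x\<bar>) integrable_on {1 - \<delta>..1}"
    using assms by (intro abs_logsin_diff_integrable_on) auto
  then have "integral {1 - \<delta>..1} (\<lambda>x. \<bar>logsin (x + \<delta>) - logsin x\<bar>) \<le> 2 * L * \<delta> + 8 * \<delta>"
    using bound
  proof (rule has_integral_le[OF integrable_integral])
    fix x
    assume x: "x \<in> {1 - \<delta>..1}"
    have "- logsin x \<le> L + 2 * sqrt \<delta> / sqrt (1 - x)"
      using neg_logsin_le_near_zero[of "1 - x" \<delta>] x assms by (simp add: L_def logsin_one_minus)
    moreover have "- logsin (x + \<delta>) \<le> L + 2 * sqrt \<delta> / sqrt (x - (1 - \<delta>))"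
      using neg_logsin_le_near_zero[of "x - (1 - \<delta>)" \<delta>] logsin.plus_1[of "x - (1 - \<delta>)"] x assms
      by (simp add: L_def algebra_simps)
    ultimately show "\<bar>logsin (x + \<delta>) - logsin x\<bar>
        \<le> 2 * L + 2 * sqrt \<delta> / sqrt (1 - x) + 2 * sqrt \<delta> / sqrt (x - (1 - \<delta>))"
      using abs_logsin_diff_le[of "x + \<delta>" x] by linarith
  qed
  then show ?thesis
    by (simp add: L_def algebra_simps)
qed

lemma integral_abs_logsin_diff_ge:
  assumes "0 < \<delta>" "\<delta> \<le> 1/16"
  shows "\<delta> / 4 * (- ln \<delta> - ln 4) \<le> integral {\<delta>..1/4} (\<lambda>x. \<bar>logsin (x + \<delta>) - logsin x\<bar>)"
proof -
  have bound: "((\<lambda>x. \<delta> / (4 * x)) has_integral (\<delta> / 4 * (- ln \<delta> - ln 4))) {\<delta>..1/4}"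
    using assms
    by (intro has_integral_eq_rhs[OF has_integral_real_derivative_interior[where G = "\<lambda>x. \<delta> / 4 * ln x"]])
      (auto intro!: derivative_eq_intros continuous_intros simp: field_simps ln_div)
  have "(\<lambda>x. \<bar>logsin (x + \<delta>) - logsin x\<bar>) integrable_on {\<delta>..1/4}"
    using assms by (intro abs_logsin_diff_integrable_on) auto
  with bound show ?thesis
  proof (rule has_integral_le[OF _ integrable_integral])
    fix x
    assume x: "x \<in> {\<delta>..1/4}"
    obtain z where z: "x < z" "z < x + \<delta>"
      and diff: "logsin (x + \<delta>) - logsin x = \<delta> * (pi * cot (pi * z))"
      using logsin_diff_mean_value[of x "x + \<delta>"] x assms by auto
    have "1 / (4 * x) \<le> 1 / (2 * z)"
      using z x assms by (intro divide_left_mono) auto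
    also have "\<dots> \<le> pi * cot (pi * z)"
      using z x assms by (intro inverse_le_pi_cot_pi) auto
    finally have "\<delta> * (1 / (4 * x)) \<le> logsin (x + \<delta>) - logsin x"
      unfolding diff using assms by (intro mult_left_mono) auto
    then show "\<delta> / (4 * x) \<le> \<bar>logsin (x + \<delta>) - logsin x\<bar>"
      by simp
  qed
qed

lemma omega1_logsin_bounds:
  assumes "0 < \<delta>" "\<delta> \<le> 1/16"
  shows "1/8 * \<delta> * \<bar>ln \<delta>\<bar> \<le> omega1 logsin \<delta>" and "omega1 logsin \<delta> \<le> 24 * \<delta> * \<bar>ln \<delta>\<bar>"
proof -
  define f where "f = (\<lambda>x. \<bar>logsin (x + \<delta>) - logsin x\<bar>)"
  define L where "L = - ln \<delta>"
  have abs_ln: "\<bar>ln \<delta>\<bar> = L"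
    using assms by (simp add: L_def)
  have "ln \<delta> \<le> ln (1/16)"
    using assms by simp
  then have "ln 16 \<le> L"
    by (simp add: L_def ln_div)
  moreover have "1 \<le> ln (16::real)"
    using exp_le by (simp add: ln_ge_iff)
  moreover have "ln (16::real) = 2 * ln 4"
    using ln_mult[of 4 "4::real"] by simp
  ultimately have L_ge: "1 \<le> L" "2 * ln 4 \<le> L"
    by linarith+
  have omega: "omega1 logsin \<delta> = integral {0..1} f"
    using omega1_logsin_eq_integral(2)[of \<delta>] assms by (simp add: f_def)
  have integrable: "f integrable_on {a..b}" if "0 \<le> a" "b \<le> 1" for a b
    unfolding f_def using assms that by (intro abs_logsin_diff_integrable_on) auto
  have "integral {0..1} f = integral {0..\<delta>} f + integral {\<delta>..1 - 2 * \<delta>} f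
      + integral {1 - 2 * \<delta>..1 - \<delta>} f + integral {1 - \<delta>..1} f"
    using assms integrable
    by (simp add: Henstock_Kurzweil_Integration.integral_combine)
  also have "\<dots> \<le> (2 * \<delta> * L + 4 * \<delta>) + 2 * \<delta> * L + (2 * \<delta> * L + 4 * \<delta>) + (2 * \<delta> * L + 8 * \<delta>)"
    using integral_abs_logsin_diff_near_zero_le[OF assms] integral_abs_logsin_diff_middle_le[OF assms]
      integral_abs_logsin_diff_before_one_le[OF assms] integral_abs_logsin_diff_near_one_le[OF assms]
    unfolding f_def L_def by (intro add_mono)
  also have "\<dots> \<le> 24 * \<delta> * L"
    using L_ge assms by (simp add: algebra_simps)
  finally show "omega1 logsin \<delta> \<le> 24 * \<delta> * \<bar>ln \<delta>\<bar>"
    by (simp add: omega abs_ln)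
  have "1/8 * \<delta> * L \<le> \<delta> / 4 * (L - ln 4)"
    using L_ge assms by (simp add: field_simps)
  also have "\<dots> \<le> integral {\<delta>..1/4} f"
    using integral_abs_logsin_diff_ge[OF assms] by (simp add: f_def L_def)
  also have "\<dots> \<le> integral {0..1} f"
    using assms by (intro integral_subset_le integrable) (auto simp: f_def)
  finally show "1/8 * \<delta> * \<bar>ln \<delta>\<bar> \<le> omega1 logsin \<delta>"
    by (simp add: omega abs_ln)
qed

lemma omega1_logsin_asymptotic_bounds:
  "\<forall>\<^sub>F \<delta> in at_right 0. 1/8 * \<delta> * \<bar>ln \<delta>\<bar> \<le> omega1 logsin \<delta> \<and> omega1 logsin \<delta> \<le> 24 * \<delta> * \<bar>ln \<delta>\<bar>"
proof (rule eventually_at_rightI[of 0 "1/16"])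
  fix \<delta> :: real
  assume "\<delta> \<in> {0<..<1/16}"
  then show "1/8 * \<delta> * \<bar>ln \<delta>\<bar> \<le> omega1 logsin \<delta> \<and> omega1 logsin \<delta> \<le> 24 * \<delta> * \<bar>ln \<delta>\<bar>"
    by (intro conjI omega1_logsin_bounds) auto
qed simp

section \<open>Correlations of dilates of log |2 sin pi x|\<close>

definition log_two_sin :: "real \<Rightarrow> real" where
  "log_two_sin x = logsin x + ln 2"

lemma log_two_sin_eq: "sin (pi * x) \<noteq> 0 \<Longrightarrow> log_two_sin x = ln (2 * \<bar>sin (pi * x)\<bar>)"
  by (simp add: log_two_sin_def logsin_def ln_mult)

interpretation log_two_sin: periodic_fun_simple' log_two_sin
  by standard (simp add: log_two_sin_def logsin.plus_1)

lemma borel_measurable_log_two_sin [measurable]: "log_two_sin \<in> borel_measurable borel"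
  unfolding log_two_sin_def by measurable

lemma norm_cis_diff: "norm (cis a - cis b) = 2 * \<bar>sin ((a - b) / 2)\<bar>"
proof -
  have "(norm (cis a - cis b))\<^sup>2 = (cos a - cos b)\<^sup>2 + (sin a - sin b)\<^sup>2"
    by (simp add: cmod_power2)
  also have "\<dots> = 2 - 2 * (cos a * cos b + sin a * sin b)"
    by (simp add: power2_eq_square algebra_simps)
  also have "cos a * cos b + sin a * sin b = cos (a - b)"
    by (simp add: cos_diff)
  also have "cos (a - b) = cos (2 * ((a - b) / 2))"
    by (simp only: mult_2 field_sum_of_halves)
  also have "\<dots> = 1 - 2 * (sin ((a - b) / 2))\<^sup>2"
    by (rule cos_double_sin)
  finally have "(norm (cis a - cis b))\<^sup>2 = (2 * \<bar>sin ((a - b) / 2)\<bar>)\<^sup>2"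
    by (simp add: power_mult_distrib)
  then show ?thesis
    by (rule power2_eq_imp_eq) auto
qed

lemma power_minus_one_eq_prod_roots_unity:
  fixes z :: complex
  assumes "n > 0"
  shows "z ^ n - 1 = (\<Prod>k<n. z - cis (2 * pi * real k / real n))"
proof -
  define p :: "complex poly" where "p = [:-1:] + monom 1 n"
  have poly_p: "poly p w = w ^ n - 1" for w
    by (simp add: p_def poly_monom)
  have "degree p = n"
    unfolding p_def using assms by (subst degree_add_eq_right) (auto simp: degree_monom_eq)
  then have "lead_coeff p = 1"
    using assms by (cases n) (auto simp: p_def coeff_monom)
  have "rsquarefree p"
    unfolding rsquarefree_roots
  proof (intro allI notI)
    fix w
    assume "poly p w = 0 \<and> poly (pderiv p) w = 0"
    then have "w ^ n = 1" and "w = 0"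
      using assms by (auto simp: poly_p p_def pderiv_add pderiv_monom pderiv_pCons poly_monom)
    with assms show False
      by (simp add: zero_power)
  qed
  then have "p = (\<Prod>w | w ^ n = 1. [:- w, 1:])"
    using complex_poly_decompose_rsquarefree[of p] \<open>lead_coeff p = 1\<close> by (simp add: poly_p)
  then have "z ^ n - 1 = (\<Prod>w | w ^ n = 1. z - w)"
    by (simp add: poly_prod flip: poly_p)
  also have "\<dots> = (\<Prod>k<n. z - cis (2 * pi * real k / real n))"
    by (rule prod.reindex_bij_betw[OF Complex.bij_betw_roots_unity[OF assms], symmetric])
  finally show ?thesis .
qed

lemma abs_sin_pi_eq_prod:
  assumes "n > 0"
  shows "2 * \<bar>sin (pi * x)\<bar> = (\<Prod>k<n. 2 * \<bar>sin (pi * (x + real k) / real n)\<bar>)"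
proof -
  have "cis (- 2 * pi * x / real n) ^ n = cis (real n * (- 2 * pi * x / real n))"
    by (rule Complex.DeMoivre)
  also have "real n * (- 2 * pi * x / real n) = - 2 * pi * x"
    using assms by simp
  finally have "cis (- 2 * pi * x) - cis 0 = (\<Prod>k<n. cis (- 2 * pi * x / real n) - cis (2 * pi * real k / real n))"
    using power_minus_one_eq_prod_roots_unity[OF assms, of "cis (- 2 * pi * x / real n)"] by simp
  then have "norm (cis (- 2 * pi * x) - cis 0)
      = (\<Prod>k<n. norm (cis (- 2 * pi * x / real n) - cis (2 * pi * real k / real n)))"
    by (simp add: prod_norm)
  also have "\<dots> = (\<Prod>k<n. 2 * \<bar>sin (pi * (x + real k) / real n)\<bar>)"
  proof (rule prod.cong)
    fix k
    have "(- 2 * pi * x / real n - 2 * pi * real k / real n) / 2 = - (pi * (x + real k) / real n)"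
      by (simp add: field_simps add_divide_distrib)
    then show "norm (cis (- 2 * pi * x / real n) - cis (2 * pi * real k / real n))
        = 2 * \<bar>sin (pi * (x + real k) / real n)\<bar>"
      by (simp only: norm_cis_diff sin_minus abs_minus_cancel)
  qed simp
  finally show ?thesis
    using norm_cis_diff[of "- 2 * pi * x" 0] by simp
qed

lemma sum_log_two_sin_shifts:
  assumes "n > 0" "sin (pi * w) \<noteq> 0"
  shows "(\<Sum>j<n. log_two_sin ((w + real j) / real n)) = log_two_sin w"
proof -
  have prod: "2 * \<bar>sin (pi * w)\<bar> = (\<Prod>k<n. 2 * \<bar>sin (pi * (w + real k) / real n)\<bar>)"
    by (rule abs_sin_pi_eq_prod[OF assms(1)])
  have nonzero: "sin (pi * (w + real k) / real n) \<noteq> 0" if "k < n" for k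
  proof
    assume "sin (pi * (w + real k) / real n) = 0"
    then have "(\<Prod>k<n. 2 * \<bar>sin (pi * (w + real k) / real n)\<bar>) = 0"
      using that by (intro prod_zero) auto
    with prod have "2 * \<bar>sin (pi * w)\<bar> = 0"
      by linarith
    with assms(2) show False
      by simp
  qed
  have "log_two_sin w = ln (\<Prod>k<n. 2 * \<bar>sin (pi * (w + real k) / real n)\<bar>)"
    using log_two_sin_eq[OF assms(2)] prod by simp
  also have "\<dots> = (\<Sum>k<n. ln (2 * \<bar>sin (pi * (w + real k) / real n)\<bar>))"
    using nonzero by (intro ln_prod) auto
  also have "\<dots> = (\<Sum>k<n. log_two_sin ((w + real k) / real n))"
    using nonzero by (intro sum.cong refl) (simp add: log_two_sin_eq)
  finally show ?thesis
    by simp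
qed

lemma set_integrable_log_two_sin_squared: "set_integrable lborel {0..<1} (\<lambda>x. (log_two_sin x)\<^sup>2)"
proof (rule set_integrable_bound)
  show "set_integrable lborel {0..<1} (\<lambda>x. 2 * (logsin x)\<^sup>2 + 2 * (ln 2)\<^sup>2)"
    using set_integrable_logsin_squared
    by (intro set_integral_add set_integrable_mult_right)
      (auto simp: set_integrable_def intro: integrable_real_indicator)
  show "set_borel_measurable lborel {0..<1} (\<lambda>x. (log_two_sin x)\<^sup>2)"
    unfolding set_borel_measurable_def by measurable
  have "(u + v)\<^sup>2 \<le> 2 * u\<^sup>2 + 2 * v\<^sup>2" for u v :: real
    using zero_le_power2[of "u - v"] by (simp add: power2_diff power2_sum)
  then show "AE x in lborel. x \<in> {0..<1} \<longrightarrow>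
      norm ((log_two_sin x)\<^sup>2) \<le> norm (2 * (logsin x)\<^sup>2 + 2 * (ln 2)\<^sup>2)"
    by (intro AE_I2) (simp add: log_two_sin_def)
qed

lemma set_integrable_log_two_sin_mult:
  assumes "a > 0" "b > 0"
  shows "set_integrable lborel {0..<1} (\<lambda>y. log_two_sin (real a * y) * log_two_sin (real b * y))"
proof (rule set_integrable_bound)
  have "set_integrable lborel {0..<1} (\<lambda>y. (log_two_sin (real m * y))\<^sup>2)" if "m > 0" for m
    using periodic_set_integral_scale(1)[OF _ set_integrable_log_two_sin_squared that]
    by (simp add: periodic_fun_simple'_def log_two_sin.plus_1)
  then show "set_integrable lborel {0..<1}
      (\<lambda>y. (log_two_sin (real a * y))\<^sup>2 + (log_two_sin (real b * y))\<^sup>2)"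
    using assms by (intro set_integral_add) auto
  show "set_borel_measurable lborel {0..<1} (\<lambda>y. log_two_sin (real a * y) * log_two_sin (real b * y))"
    unfolding set_borel_measurable_def by measurable
  have "\<bar>u * v\<bar> \<le> u\<^sup>2 + v\<^sup>2" for u v :: real
  proof -
    have "2 * (\<bar>u\<bar> * \<bar>v\<bar>) \<le> u\<^sup>2 + v\<^sup>2"
      using zero_le_power2[of "\<bar>u\<bar> - \<bar>v\<bar>"] by (simp add: power2_diff)
    moreover have "0 \<le> \<bar>u\<bar> * \<bar>v\<bar>"
      by simp
    ultimately show ?thesis
      unfolding abs_mult by linarith
  qed
  then show "AE y in lborel. y \<in> {0..<1} \<longrightarrow> norm (log_two_sin (real a * y) * log_two_sin (real b * y))
      \<le> norm ((log_two_sin (real a * y))\<^sup>2 + (log_two_sin (real b * y))\<^sup>2)"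
    by (intro AE_I2) simp
qed

lemma AE_sin_pi_mult_neq_zero:
  assumes "c \<noteq> 0"
  shows "AE z in lborel. sin (pi * (c * z)) \<noteq> 0"
proof (rule AE_I')
  show "range (\<lambda>i::int. of_int i / c) \<in> null_sets lborel"
    by (rule countable_imp_null_set_lborel) auto
  show "{z \<in> space lborel. \<not> sin (pi * (c * z)) \<noteq> 0} \<subseteq> range (\<lambda>i::int. of_int i / c)"
  proof (intro subsetI)
    fix z
    assume "z \<in> {z \<in> space lborel. \<not> sin (pi * (c * z)) \<noteq> 0}"
    then obtain i :: int where "pi * (c * z) = of_int i * pi"
      by (auto simp: sin_zero_iff_int2)
    then have "z = of_int i / c"
      using assms by (simp add: field_simps)
    then show "z \<in> range (\<lambda>i::int. of_int i / c)"
      by auto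
  qed
qed

lemma bij_betw_mult_mod:
  fixes a b :: nat
  assumes "coprime a b"
  shows "bij_betw (\<lambda>j. b * j mod a) {..<a} {..<a}"
proof -
  have "inj_on (\<lambda>j. b * j mod a) {..<a}"
  proof (rule inj_onI)
    fix j j'
    assume "j \<in> {..<a}" "j' \<in> {..<a}" "b * j mod a = b * j' mod a"
    moreover have "coprime b a"
      using assms by (simp add: coprime_commute)
    ultimately show "j = j'"
      by (auto simp: cong_def[symmetric] cong_mult_lcancel_nat intro: cong_less_modulus_unique_nat)
  qed
  moreover have "(\<lambda>j. b * j mod a) ` {..<a} \<subseteq> {..<a}"
    by auto
  ultimately show ?thesis
    by (simp add: bij_betw_def endo_inj_surj)
qed

lemma set_integral_log_two_sin_mult_coprime_step:
  assumes "a > 0" "b > 0" "coprime a b"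
  shows "(LINT y:{0..<1}|lborel. log_two_sin (real a * y) * log_two_sin (real b * y))
       = (LINT y:{0..<1}|lborel. log_two_sin y * log_two_sin (real b * y)) / real a"
proof -
  \<comment> \<open>multiplication by b permutes the residues modulo a\<close>
  have shifts: "(\<Sum>j<a. log_two_sin (real b * (z + real j) / real a)) = log_two_sin (real b * z)"
    if "sin (pi * (real b * z)) \<noteq> 0" for z
  proof -
    have "log_two_sin (real b * (z + real j) / real a)
        = log_two_sin ((real b * z + real (b * j mod a)) / real a + real (b * j div a))" for j
      using assms(1) by (simp add: field_simps flip: of_nat_mult of_nat_add div_mult_mod_eq)
    then have "(\<Sum>j<a. log_two_sin (real b * (z + real j) / real a))
        = (\<Sum>j<a. log_two_sin ((real b * z + real (b * j mod a)) / real a))"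
      by (simp add: log_two_sin.plus_of_nat)
    also have "\<dots> = (\<Sum>r<a. log_two_sin ((real b * z + real r) / real a))"
      by (rule sum.reindex_bij_betw[OF bij_betw_mult_mod[OF assms(3)]])
    also have "\<dots> = log_two_sin (real b * z)"
      by (rule sum_log_two_sin_shifts[OF assms(1) that])
    finally show ?thesis .
  qed
  have "(LINT y:{0..<1}|lborel. log_two_sin (real a * y) * log_two_sin (real b * y))
      = (LINT z:{0..<1}|lborel. log_two_sin z * (\<Sum>j<a. log_two_sin (real b * (z + real j) / real a))) / real a"
    using periodic_set_integral_mult_scale(2)[of log_two_sin a "\<lambda>y. log_two_sin (real b * y)"]
      set_integrable_log_two_sin_mult[OF assms(1,2)] assms(1)
    by (simp add: periodic_fun_simple'_def log_two_sin.plus_1)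
  also have "(LINT z:{0..<1}|lborel. log_two_sin z * (\<Sum>j<a. log_two_sin (real b * (z + real j) / real a)))
      = (LINT z:{0..<1}|lborel. log_two_sin z * log_two_sin (real b * z))"
    using AE_sin_pi_mult_neq_zero[of "real b"] assms(2)
    by (intro set_lebesgue_integral_cong_AE) (auto elim!: AE_mp simp: shifts)
  finally show ?thesis .
qed

lemma set_integral_log_two_sin_mult:
  assumes "a > 0" "b > 0"
  shows "(LINT y:{0..<1}|lborel. log_two_sin (real a * y) * log_two_sin (real b * y))
       = (LINT x:{0..<1}|lborel. (log_two_sin x)\<^sup>2) * (real (gcd a b))\<^sup>2 / (real a * real b)"
proof -
  define d where "d = gcd a b"
  obtain a' b' where ab: "a = d * a'" "b = d * b'" and "coprime a' b'"
    using gcd_coprime_exists[of a b] assms unfolding d_def by (auto simp: mult.commute)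
  have pos: "d > 0" "a' > 0" "b' > 0"
    using assms ab by auto
  define H where "H y = log_two_sin (real a' * y) * log_two_sin (real b' * y)" for y
  have "periodic_fun_simple' H"
    by standard (simp add: H_def distrib_left log_two_sin.plus_of_nat)
  moreover have "set_integrable lborel {0..<1} H"
    unfolding H_def by (rule set_integrable_log_two_sin_mult[OF pos(2,3)])
  ultimately have "(LINT y:{0..<1}|lborel. H (real d * y)) = (LINT y:{0..<1}|lborel. H y)"
    using pos(1) by (rule periodic_set_integral_scale(2))
  also have "\<dots> = (LINT y:{0..<1}|lborel. log_two_sin y * log_two_sin (real b' * y)) / real a'"
    unfolding H_def by (rule set_integral_log_two_sin_mult_coprime_step[OF pos(2,3) \<open>coprime a' b'\<close>])
  also have "(LINT y:{0..<1}|lborel. log_two_sin y * log_two_sin (real b' * y))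
      = (LINT y:{0..<1}|lborel. log_two_sin (real b' * y) * log_two_sin (real 1 * y))"
    by (simp add: mult.commute)
  also have "\<dots> = (LINT y:{0..<1}|lborel. log_two_sin y * log_two_sin (real 1 * y)) / real b'"
    using pos by (intro set_integral_log_two_sin_mult_coprime_step) auto
  finally show ?thesis
    using pos unfolding d_def[symmetric] unfolding ab H_def
    by (simp add: power2_eq_square mult_ac field_simps)
qed

section \<open>Almost everywhere convergence from second moments\<close>

lemma sum_power_half_le_two:
  assumes "finite A" "inj_on f A"
  shows "(\<Sum>l\<in>A. (1/2::real) ^ f l) \<le> 2"
proof -
  have "(\<Sum>l\<in>A. (1/2::real) ^ f l) = (\<Sum>m\<in>f ` A. (1/2) ^ m)"
    using assms(2) by (simp add: sum.reindex)
  also have "\<dots> \<le> (\<Sum>m. (1/2::real) ^ m)"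
    using assms(1) by (intro sum_le_suminf) auto
  also have "\<dots> = 2"
    by (simp add: suminf_geometric)
  finally show ?thesis .
qed

lemma
  fixes X :: "nat \<Rightarrow> 'a \<Rightarrow> real"
  assumes "finite I" "\<And>k l. k \<in> I \<Longrightarrow> l \<in> I \<Longrightarrow> integrable M (\<lambda>x. X k x * X l x)"
  shows integrable_square_sum: "integrable M (\<lambda>x. (\<Sum>n\<in>I. X n x)\<^sup>2)"
    and integral_square_sum: "(\<integral>x. (\<Sum>n\<in>I. X n x)\<^sup>2 \<partial>M) = (\<Sum>k\<in>I. \<Sum>l\<in>I. \<integral>x. X k x * X l x \<partial>M)"
    and integrable_square_sum_abs: "integrable M (\<lambda>x. (\<Sum>n\<in>I. \<bar>X n x\<bar>)\<^sup>2)"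
proof -
  have expand: "(\<Sum>n\<in>I. X n x)\<^sup>2 = (\<Sum>k\<in>I. \<Sum>l\<in>I. X k x * X l x)"
    and expand_abs: "(\<Sum>n\<in>I. \<bar>X n x\<bar>)\<^sup>2 = (\<Sum>k\<in>I. \<Sum>l\<in>I. \<bar>X k x * X l x\<bar>)" for x
    by (simp_all add: power2_eq_square sum_product abs_mult)
  show "integrable M (\<lambda>x. (\<Sum>n\<in>I. X n x)\<^sup>2)"
    and "integrable M (\<lambda>x. (\<Sum>n\<in>I. \<bar>X n x\<bar>)\<^sup>2)"
    unfolding expand expand_abs using assms(2) by (intro Bochner_Integration.integrable_sum integrable_abs; auto)+
  show "(\<integral>x. (\<Sum>n\<in>I. X n x)\<^sup>2 \<partial>M) = (\<Sum>k\<in>I. \<Sum>l\<in>I. \<integral>x. X k x * X l x \<partial>M)"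
    unfolding expand using assms(2)
    by (subst Bochner_Integration.integral_sum) (auto intro!: sum.cong Bochner_Integration.integral_sum)
qed

lemma integral_square_sum_le_geometric:
  fixes X :: "nat \<Rightarrow> 'a \<Rightarrow> real"
  assumes "finite I"
    and integrable: "\<And>k l. k \<in> I \<Longrightarrow> l \<in> I \<Longrightarrow> integrable M (\<lambda>x. X k x * X l x)"
    and decay: "\<And>k l. k \<in> I \<Longrightarrow> l \<in> I \<Longrightarrow> k \<le> l \<Longrightarrow> (\<integral>x. X k x * X l x \<partial>M) \<le> c * (1/2) ^ (l - k)"
  shows "(\<integral>x. (\<Sum>n\<in>I. X n x)\<^sup>2 \<partial>M) \<le> 4 * c * real (card I)"
proof -
  have row: "(\<Sum>l\<in>I. \<integral>x. X k x * X l x \<partial>M) \<le> 4 * c" if "k \<in> I" for k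
  proof -
    have "0 \<le> (\<integral>x. X k x * X k x \<partial>M)"
      by (simp add: integral_nonneg_AE)
    moreover have "(\<integral>x. X k x * X k x \<partial>M) \<le> c"
      using decay[OF that that] by simp
    ultimately have "0 \<le> c"
      by linarith
    have "{l\<in>I. k \<le> l} \<union> {l\<in>I. l < k} = I" and disjoint: "{l\<in>I. k \<le> l} \<inter> {l\<in>I. l < k} = {}"
      by auto
    then have "(\<Sum>l\<in>I. \<integral>x. X k x * X l x \<partial>M)
        = (\<Sum>l\<in>{l\<in>I. k \<le> l}. \<integral>x. X k x * X l x \<partial>M) + (\<Sum>l\<in>{l\<in>I. l < k}. \<integral>x. X k x * X l x \<partial>M)"
      using sum.union_disjoint[OF _ _ disjoint, of "\<lambda>l. \<integral>x. X k x * X l x \<partial>M"] assms(1)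
      by simp
    also have "\<dots> = (\<Sum>l\<in>{l\<in>I. k \<le> l}. \<integral>x. X k x * X l x \<partial>M) + (\<Sum>l\<in>{l\<in>I. l < k}. \<integral>x. X l x * X k x \<partial>M)"
      by (simp add: mult.commute)
    also have "\<dots> \<le> (\<Sum>l\<in>{l\<in>I. k \<le> l}. c * (1/2) ^ (l - k)) + (\<Sum>l\<in>{l\<in>I. l < k}. c * (1/2) ^ (k - l))"
      using that by (intro add_mono sum_mono decay) auto
    also have "\<dots> \<le> c * 2 + c * 2"
      unfolding sum_distrib_left[symmetric] using \<open>0 \<le> c\<close> assms(1)
      by (intro add_mono mult_left_mono sum_power_half_le_two) (auto simp: inj_on_def)
    finally show ?thesis
      by simp
  qed
  have "(\<integral>x. (\<Sum>n\<in>I. X n x)\<^sup>2 \<partial>M) = (\<Sum>k\<in>I. \<Sum>l\<in>I. \<integral>x. X k x * X l x \<partial>M)"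
    using assms(1) integrable by (rule integral_square_sum)
  also have "\<dots> \<le> (\<Sum>k\<in>I. 4 * c)"
    using row by (rule sum_mono)
  finally show ?thesis
    by (simp add: mult.commute)
qed

lemma integral_square_sum_abs_le:
  fixes X :: "nat \<Rightarrow> 'a \<Rightarrow> real"
  assumes "finite I" and integrable: "\<And>k l. k \<in> I \<Longrightarrow> l \<in> I \<Longrightarrow> integrable M (\<lambda>x. X k x * X l x)"
  shows "(\<integral>x. (\<Sum>n\<in>I. \<bar>X n x\<bar>)\<^sup>2 \<partial>M) \<le> real (card I) * (\<Sum>n\<in>I. \<integral>x. (X n x)\<^sup>2 \<partial>M)"
proof -
  have squares: "integrable M (\<lambda>x. (X n x)\<^sup>2)" if "n \<in> I" for n
    using integrable[OF that that] by (simp add: power2_eq_square)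
  have "(\<integral>x. (\<Sum>n\<in>I. \<bar>X n x\<bar>)\<^sup>2 \<partial>M) \<le> (\<integral>x. real (card I) * (\<Sum>n\<in>I. (X n x)\<^sup>2) \<partial>M)"
  proof (rule integral_mono)
    show "integrable M (\<lambda>x. (\<Sum>n\<in>I. \<bar>X n x\<bar>)\<^sup>2)"
      using assms by (rule integrable_square_sum_abs)
    show "integrable M (\<lambda>x. real (card I) * (\<Sum>n\<in>I. (X n x)\<^sup>2))"
      using squares by (intro integrable_mult_right Bochner_Integration.integrable_sum) auto
    show "(\<Sum>n\<in>I. \<bar>X n x\<bar>)\<^sup>2 \<le> real (card I) * (\<Sum>n\<in>I. (X n x)\<^sup>2)" for x
      using sum_squared_le_sum_of_squares[of "\<lambda>n. \<bar>X n x\<bar>" I] by (simp add: mult.commute)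
  qed
  also have "\<dots> = real (card I) * (\<Sum>n\<in>I. \<integral>x. (X n x)\<^sup>2 \<partial>M)"
    using squares by simp
  finally show ?thesis .
qed

lemma AE_tendsto_zero_of_summable_integral:
  fixes f :: "nat \<Rightarrow> 'a \<Rightarrow> real"
  assumes integrable: "\<And>j. integrable M (f j)" and nonneg: "\<And>j x. 0 \<le> f j x"
    and summable: "summable (\<lambda>j. \<integral>x. f j x \<partial>M)"
  shows "AE x in M. (\<lambda>j. f j x) \<longlonglongrightarrow> 0"
proof -
  have [measurable]: "f j \<in> borel_measurable M" for j
    using integrable by (rule borel_measurable_integrable)
  have "(\<integral>\<^sup>+ x. (\<Sum>j. ennreal (f j x)) \<partial>M) = (\<Sum>j. \<integral>\<^sup>+ x. ennreal (f j x) \<partial>M)"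
    by (rule nn_integral_suminf) measurable
  also have "\<dots> = (\<Sum>j. ennreal (\<integral>x. f j x \<partial>M))"
    using integrable nonneg by (intro suminf_cong nn_integral_eq_integral AE_I2) auto
  also have "\<dots> \<noteq> \<infinity>"
    unfolding infinity_ennreal_def using summable
    by (rule ennreal_suminf_neq_top) (simp add: integral_nonneg_AE nonneg)
  finally have "AE x in M. (\<Sum>j. ennreal (f j x)) \<noteq> \<infinity>"
    by (intro nn_integral_PInf_AE) measurable
  then show ?thesis
  proof (rule AE_mp, intro AE_I2 impI)
    fix x
    assume "(\<Sum>j. ennreal (f j x)) \<noteq> \<infinity>"
    then have "summable (\<lambda>j. f j x)"
      using nonneg by (intro summable_suminf_not_top) auto
    then show "(\<lambda>j. f j x) \<longlonglongrightarrow> 0"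
      by (rule summable_LIMSEQ_zero)
  qed
qed

lemma abs_average_le_initial_average:
  fixes x :: "nat \<Rightarrow> real"
  assumes "1 \<le> m" "m \<le> N" "N \<le> m'"
  shows "\<bar>\<Sum>n=1..N. x n\<bar> / N \<le> (\<bar>\<Sum>n=1..m. x n\<bar> + (\<Sum>n\<in>{m<..m'}. \<bar>x n\<bar>)) / m"
proof -
  have "{1..N} = {1..m} \<union> {m<..N}"
    using assms by auto
  then have "\<bar>\<Sum>n=1..N. x n\<bar> = \<bar>(\<Sum>n=1..m. x n) + (\<Sum>n\<in>{m<..N}. x n)\<bar>"
    by (simp add: sum.union_disjoint ivl_disj_int)
  also have "\<dots> \<le> \<bar>\<Sum>n=1..m. x n\<bar> + (\<Sum>n\<in>{m<..m'}. \<bar>x n\<bar>)"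
    using assms
    by (intro order_trans[OF abs_triangle_ineq] add_left_mono order_trans[OF sum_abs] sum_mono2) auto
  finally show ?thesis
    using assms by (intro frac_le) auto
qed

lemma averages_tendsto_zero_of_squares:
  fixes x :: "nat \<Rightarrow> real"
  assumes squares: "(\<lambda>j. (\<Sum>n=1..(Suc j)\<^sup>2. x n) / (Suc j)\<^sup>2) \<longlonglongrightarrow> 0"
    and gaps: "(\<lambda>j. (\<Sum>n\<in>{(Suc j)\<^sup>2<..(Suc (Suc j))\<^sup>2}. \<bar>x n\<bar>) / (Suc j)\<^sup>2) \<longlonglongrightarrow> 0"
  shows "(\<lambda>N. (\<Sum>n=1..N. x n) / N) \<longlonglongrightarrow> 0"
proof -
  define u where "u j = (\<bar>\<Sum>n=1..(Suc j)\<^sup>2. x n\<bar> + (\<Sum>n\<in>{(Suc j)\<^sup>2<..(Suc (Suc j))\<^sup>2}. \<bar>x n\<bar>)) / (Suc j)\<^sup>2"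
    for j
  have "u \<longlonglongrightarrow> 0"
    unfolding u_def add_divide_distrib
    using tendsto_add[OF tendsto_rabs_zero[OF squares] gaps] by (simp add: abs_divide)
  moreover have "filterlim (\<lambda>N. floor_sqrt N - 1) at_top sequentially"
    unfolding filterlim_at_top
  proof (intro allI eventually_sequentiallyI)
    fix M N :: nat
    assume "(Suc M)\<^sup>2 \<le> N"
    then have "Suc M \<le> floor_sqrt N"
      by (rule le_floor_sqrtI)
    then show "M \<le> floor_sqrt N - 1"
      by simp
  qed
  ultimately have u_sqrt: "(\<lambda>N. u (floor_sqrt N - 1)) \<longlonglongrightarrow> 0"
    by (rule filterlim_compose)
  show ?thesis
  proof (rule Lim_null_comparison[OF _ u_sqrt], rule eventually_sequentiallyI)
    fix N :: nat
    assume "1 \<le> N"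
    then have Suc_pred: "Suc (floor_sqrt N - 1) = floor_sqrt N"
      by (simp add: floor_sqrt_greater_zero_iff)
    have "1 \<le> (floor_sqrt N)\<^sup>2"
      using \<open>1 \<le> N\<close> by (simp add: Suc_le_eq floor_sqrt_greater_zero_iff)
    then have "\<bar>\<Sum>n=1..N. x n\<bar> / N
        \<le> (\<bar>\<Sum>n=1..(floor_sqrt N)\<^sup>2. x n\<bar> + (\<Sum>n\<in>{(floor_sqrt N)\<^sup>2<..(Suc (floor_sqrt N))\<^sup>2}. \<bar>x n\<bar>))
          / (floor_sqrt N)\<^sup>2"
      using floor_sqrt_power2_le[of N] Suc_floor_sqrt_power2_gt[of N]
      by (intro abs_average_le_initial_average) auto
    then show "norm ((\<Sum>n=1..N. x n) / N) \<le> u (floor_sqrt N - 1)"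
      unfolding u_def Suc_pred by (simp add: abs_divide)
  qed
qed

lemma AE_tendsto_zero_of_integral_square_le:
  fixes f :: "nat \<Rightarrow> 'a \<Rightarrow> real"
  assumes integrable: "\<And>j. integrable M (\<lambda>x. (f j x)\<^sup>2)"
    and bound: "\<And>j. (\<integral>x. (f j x)\<^sup>2 \<partial>M) \<le> K / (Suc j)\<^sup>2"
  shows "AE x in M. (\<lambda>j. f j x) \<longlonglongrightarrow> 0"
proof -
  have "summable (\<lambda>j. inverse (real (Suc j) ^ 2))"
    using inverse_power_summable[of 2, where 'a = real] by (subst summable_Suc_iff) simp
  then have "summable (\<lambda>j. K / (Suc j)\<^sup>2)"
    using summable_mult[of _ K] by (simp add: divide_inverse)
  then have "summable (\<lambda>j. \<integral>x. (f j x)\<^sup>2 \<partial>M)"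
    by (rule summable_comparison_test') (use bound in \<open>simp add: integral_nonneg_AE\<close>)
  with integrable have "AE x in M. (\<lambda>j. (f j x)\<^sup>2) \<longlonglongrightarrow> 0"
    by (intro AE_tendsto_zero_of_summable_integral) auto
  then show ?thesis
  proof (rule AE_mp, intro AE_I2 impI)
    fix x
    assume "(\<lambda>j. (f j x)\<^sup>2) \<longlonglongrightarrow> 0"
    from tendsto_real_sqrt[OF this] show "(\<lambda>j. f j x) \<longlonglongrightarrow> 0"
      by (simp add: tendsto_rabs_zero_iff)
  qed
qed

lemma AE_averages_tendsto_zero_of_second_moments:
  fixes X :: "nat \<Rightarrow> 'a \<Rightarrow> real" and C :: real
  assumes integrable: "\<And>k l. 1 \<le> k \<Longrightarrow> 1 \<le> l \<Longrightarrow> integrable M (\<lambda>x. X k x * X l x)"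
    and sum_bound: "\<And>I. finite I \<Longrightarrow> I \<subseteq> {1..} \<Longrightarrow> (\<integral>x. (\<Sum>n\<in>I. X n x)\<^sup>2 \<partial>M) \<le> C * real (card I)"
    and abs_sum_bound: "\<And>I. finite I \<Longrightarrow> I \<subseteq> {1..} \<Longrightarrow> (\<integral>x. (\<Sum>n\<in>I. \<bar>X n x\<bar>)\<^sup>2 \<partial>M) \<le> C * (real (card I))\<^sup>2"
  shows "AE x in M. (\<lambda>N. (\<Sum>n=1..N. X n x) / N) \<longlonglongrightarrow> 0"
proof -
  have "(\<integral>x. (X 1 x)\<^sup>2 \<partial>M) \<le> C"
    using sum_bound[of "{1}"] by simp
  moreover have "0 \<le> (\<integral>x. (X 1 x)\<^sup>2 \<partial>M)"
    by (simp add: integral_nonneg_AE)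
  ultimately have "0 \<le> C"
    by linarith
  have "AE x in M. (\<lambda>j. (\<Sum>n=1..(Suc j)\<^sup>2. X n x) / (Suc j)\<^sup>2) \<longlonglongrightarrow> 0"
  proof (rule AE_tendsto_zero_of_integral_square_le[where K = C])
    fix j
    show "integrable M (\<lambda>x. ((\<Sum>n=1..(Suc j)\<^sup>2. X n x) / (Suc j)\<^sup>2)\<^sup>2)"
      unfolding power_divide using integrable by (intro integrable_divide integrable_square_sum) auto
    define m :: real where "m = (Suc j)\<^sup>2"
    have "0 < m"
      by (simp add: m_def)
    have "(\<integral>x. ((\<Sum>n=1..(Suc j)\<^sup>2. X n x) / m)\<^sup>2 \<partial>M) = (\<integral>x. (\<Sum>n=1..(Suc j)\<^sup>2. X n x)\<^sup>2 \<partial>M) / m\<^sup>2"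
      by (simp add: power_divide)
    also have "\<dots> \<le> C * m / m\<^sup>2"
      using sum_bound[of "{1..(Suc j)\<^sup>2}"] by (intro divide_right_mono) (auto simp: m_def)
    also have "\<dots> = C / m"
      using \<open>0 < m\<close> by (simp add: power2_eq_square)
    finally show "(\<integral>x. ((\<Sum>n=1..(Suc j)\<^sup>2. X n x) / (Suc j)\<^sup>2)\<^sup>2 \<partial>M) \<le> C / (Suc j)\<^sup>2"
      by (simp only: m_def)
  qed
  moreover have "AE x in M. (\<lambda>j. (\<Sum>n\<in>{(Suc j)\<^sup>2<..(Suc (Suc j))\<^sup>2}. \<bar>X n x\<bar>) / (Suc j)\<^sup>2) \<longlonglongrightarrow> 0"
  proof (rule AE_tendsto_zero_of_integral_square_le[where K = "9 * C"])
    fix j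
    let ?gap = "{(Suc j)\<^sup>2<..(Suc (Suc j))\<^sup>2}"
    have gap: "finite ?gap" "?gap \<subseteq> {1..}"
      by (auto simp: Suc_le_eq intro: le_less_trans[OF zero_le])
    show "integrable M (\<lambda>x. ((\<Sum>n\<in>?gap. \<bar>X n x\<bar>) / (Suc j)\<^sup>2)\<^sup>2)"
      unfolding power_divide using integrable gap
      by (intro integrable_divide integrable_square_sum_abs) (auto simp: subset_eq)
    define m :: real where "m = (Suc j)\<^sup>2"
    have "0 < m"
      by (simp add: m_def)
    have "real (card ?gap) \<le> 3 * real (Suc j)"
      by (simp add: power2_eq_square)
    then have "(real (card ?gap))\<^sup>2 \<le> (3 * real (Suc j))\<^sup>2"
      by (rule power_mono) simp
    also have "\<dots> = 9 * m"
      unfolding m_def of_nat_power power_mult_distrib by simp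
    finally have "(real (card ?gap))\<^sup>2 \<le> 9 * m" .
    have "(\<integral>x. ((\<Sum>n\<in>?gap. \<bar>X n x\<bar>) / m)\<^sup>2 \<partial>M) = (\<integral>x. (\<Sum>n\<in>?gap. \<bar>X n x\<bar>)\<^sup>2 \<partial>M) / m\<^sup>2"
      by (simp add: power_divide)
    also have "\<dots> \<le> C * (9 * m) / m\<^sup>2"
      using abs_sum_bound[OF gap] mult_left_mono[OF \<open>(real (card ?gap))\<^sup>2 \<le> 9 * m\<close> \<open>0 \<le> C\<close>]
      by (intro divide_right_mono) auto
    also have "\<dots> = 9 * C / m"
      using \<open>0 < m\<close> by (simp add: power2_eq_square)
    finally show "(\<integral>x. ((\<Sum>n\<in>?gap. \<bar>X n x\<bar>) / (Suc j)\<^sup>2)\<^sup>2 \<partial>M) \<le> 9 * C / (Suc j)\<^sup>2"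
      by (simp only: m_def)
  qed
  ultimately show ?thesis
    by eventually_elim (rule averages_tendsto_zero_of_squares)
qed

section \<open>Averages along the Mersenne numbers\<close>

lemma mersenne_ratio_le:
  assumes "k \<le> l"
  shows "real (2 ^ k - 1) / real (2 ^ l - 1 :: nat) \<le> (1/2) ^ (l - k)"
proof (cases "l = 0")
  case False
  have "(2 ^ k - 1) * 2 ^ (l - k) \<le> (2::real) ^ l - 1"
    using assms by (simp add: algebra_simps flip: power_add)
  moreover have "(1::real) < 2 ^ l"
    using False by simp
  ultimately show ?thesis
    by (simp add: of_nat_diff field_simps power_one_over)
qed (use assms in simp)

lemma set_integral_log_two_sin_mersenne_le:
  assumes "1 \<le> k" "k \<le> l"
  shows "(LINT y:{0..<1}|lborel. log_two_sin (real (2 ^ k - 1) * y) * log_two_sin (real (2 ^ l - 1) * y))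
      \<le> (LINT x:{0..<1}|lborel. (log_two_sin x)\<^sup>2) * (1/2) ^ (l - k)"
proof -
  define a b :: nat where "a = 2 ^ k - 1" and "b = 2 ^ l - 1"
  define G where "G = (LINT x:{0..<1}|lborel. (log_two_sin x)\<^sup>2)"
  have pos: "0 < a" "0 < b"
    using assms one_less_power[of "2::nat" k] one_less_power[of "2::nat" l] by (simp_all add: a_def b_def)
  have "0 \<le> G"
    unfolding G_def set_lebesgue_integral_def by (intro integral_nonneg_AE) (simp add: indicator_def)
  have "(LINT y:{0..<1}|lborel. log_two_sin (real a * y) * log_two_sin (real b * y))
      = G * (real (gcd a b))\<^sup>2 / (real a * real b)"
    unfolding G_def by (rule set_integral_log_two_sin_mult[OF pos])
  also have "\<dots> \<le> G * (real a)\<^sup>2 / (real a * real b)"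
    using pos \<open>0 \<le> G\<close> by (intro divide_right_mono mult_left_mono power_mono) (auto simp: gcd_le1_nat)
  also have "\<dots> = G * (real a / real b)"
    using pos by (simp add: power2_eq_square)
  also have "\<dots> \<le> G * (1/2) ^ (l - k)"
    using mersenne_ratio_le[OF assms(2)] \<open>0 \<le> G\<close> by (intro mult_left_mono) (simp_all add: a_def b_def)
  finally show ?thesis
    by (simp add: a_def b_def G_def)
qed

lemma AE_unit_interval_log_two_sin_mersenne_averages:
  "AE \<xi> in restrict_space lborel {0..<1}.
     (\<lambda>N. (\<Sum>n=1..N. log_two_sin (real (2 ^ n - 1 :: nat) * \<xi>)) / N) \<longlonglongrightarrow> 0"
proof -
  define X where "X n \<xi> = log_two_sin (real (2 ^ n - 1 :: nat) * \<xi>)" for n \<xi>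
  define G where "G = (LINT x:{0..<1}|lborel. (log_two_sin x)\<^sup>2)"
  let ?M = "restrict_space lborel {0..<1::real}"
  have pos: "0 < (2::nat) ^ n - 1" if "1 \<le> n" for n
    using one_less_power[of "2::nat" n] that by simp
  have products: "integrable ?M (\<lambda>\<xi>. X k \<xi> * X l \<xi>)" if "1 \<le> k" "1 \<le> l" for k l
    using set_integrable_log_two_sin_mult[OF pos pos] that by (simp add: X_def restrict_space_unit_interval)
  have squares: "(\<integral>\<xi>. (X n \<xi>)\<^sup>2 \<partial>?M) = G" if "1 \<le> n" for n
  proof -
    have "real ((2::nat) ^ n - 1) \<noteq> 0"
      using pos[OF that] by linarith
    then show ?thesis
      using set_integral_log_two_sin_mult[OF pos pos, of n n] that
      by (simp add: X_def G_def restrict_space_unit_interval power2_eq_square)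
  qed
  have "0 \<le> G"
    unfolding G_def set_lebesgue_integral_def by (intro integral_nonneg_AE) (simp add: indicator_def)
  have "AE \<xi> in ?M. (\<lambda>N. (\<Sum>n=1..N. X n \<xi>) / N) \<longlonglongrightarrow> 0"
  proof (rule AE_averages_tendsto_zero_of_second_moments[where C = "4 * G"])
    fix I :: "nat set"
    assume I: "finite I" "I \<subseteq> {1..}"
    show "(\<integral>\<xi>. (\<Sum>n\<in>I. X n \<xi>)\<^sup>2 \<partial>?M) \<le> 4 * G * real (card I)"
      using I products set_integral_log_two_sin_mersenne_le
      by (intro integral_square_sum_le_geometric) (auto simp: X_def G_def restrict_space_unit_interval subset_eq)
    have "(\<integral>\<xi>. (\<Sum>n\<in>I. \<bar>X n \<xi>\<bar>)\<^sup>2 \<partial>?M) \<le> real (card I) * (\<Sum>n\<in>I. \<integral>\<xi>. (X n \<xi>)\<^sup>2 \<partial>?M)"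
      using I products by (intro integral_square_sum_abs_le) (auto simp: subset_eq)
    also have "\<dots> = G * (real (card I))\<^sup>2"
      using I squares by (simp add: subset_eq power2_eq_square)
    also have "\<dots> \<le> 4 * G * (real (card I))\<^sup>2"
      using \<open>0 \<le> G\<close> by simp
    finally show "(\<integral>\<xi>. (\<Sum>n\<in>I. \<bar>X n \<xi>\<bar>)\<^sup>2 \<partial>?M) \<le> 4 * G * (real (card I))\<^sup>2" .
  qed (use products in auto)
  then show ?thesis
    by (simp only: X_def)
qed

lemma AE_log_two_sin_mersenne_averages:
  "AE \<xi> in lborel. (\<lambda>N. (\<Sum>n=1..N. log_two_sin (real (2 ^ n - 1 :: nat) * \<xi>)) / N) \<longlonglongrightarrow> 0"
proof (rule AE_lborel_of_periodic)
  have "log_two_sin (real (2 ^ n - 1 :: nat) * (\<xi> + 1)) = log_two_sin (real (2 ^ n - 1 :: nat) * \<xi>)" for n \<xi>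
    using log_two_sin.plus_of_nat[of "real (2 ^ n - 1 :: nat) * \<xi>" "2 ^ n - 1"]
    by (simp only: distrib_left mult_1_right)
  then show "(\<lambda>N. (\<Sum>n=1..N. log_two_sin (real (2 ^ n - 1 :: nat) * (\<xi> + 1))) / N) \<longlonglongrightarrow> 0
      \<longleftrightarrow> (\<lambda>N. (\<Sum>n=1..N. log_two_sin (real (2 ^ n - 1 :: nat) * \<xi>)) / N) \<longlonglongrightarrow> 0" for \<xi>
    by (simp only:)
  show "AE \<xi> in lborel. \<xi> \<in> {0..<1} \<longrightarrow>
      (\<lambda>N. (\<Sum>n=1..N. log_two_sin (real (2 ^ n - 1 :: nat) * \<xi>)) / N) \<longlonglongrightarrow> 0"
    using AE_unit_interval_log_two_sin_mersenne_averages by (simp add: restrict_space_unit_interval)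
qed

lemma ln_abs_sin_mersenne_eq:
  "ln \<bar>sin (pi * (2 ^ n * \<xi> - \<xi>))\<bar> = log_two_sin (real (2 ^ n - 1 :: nat) * \<xi>) - ln 2"
  by (simp add: log_two_sin_def logsin_def of_nat_diff left_diff_distrib)

lemma AE_ln_abs_sin_mersenne_averages:
  "AE \<xi> in lborel. (\<lambda>N. (\<Sum>n=1..N. ln \<bar>sin (pi * (2 ^ n * \<xi> - \<xi>))\<bar>) / real N) \<longlonglongrightarrow> - ln 2"
  using AE_log_two_sin_mersenne_averages
proof (rule AE_mp, intro AE_I2 impI)
  fix \<xi> :: real
  assume "(\<lambda>N. (\<Sum>n=1..N. log_two_sin (real (2 ^ n - 1 :: nat) * \<xi>)) / N) \<longlonglongrightarrow> 0"
  then have "(\<lambda>N. (\<Sum>n=1..N. log_two_sin (real (2 ^ n - 1 :: nat) * \<xi>)) / N - ln 2) \<longlonglongrightarrow> 0 - ln 2"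
    by (intro tendsto_diff tendsto_const)
  moreover have "\<forall>\<^sub>F N in sequentially. (\<Sum>n=1..N. log_two_sin (real (2 ^ n - 1 :: nat) * \<xi>)) / N - ln 2
      = (\<Sum>n=1..N. ln \<bar>sin (pi * (2 ^ n * \<xi> - \<xi>))\<bar>) / real N"
  proof (rule eventually_sequentiallyI)
    fix N :: nat
    assume "1 \<le> N"
    then show "(\<Sum>n=1..N. log_two_sin (real (2 ^ n - 1 :: nat) * \<xi>)) / N - ln 2
        = (\<Sum>n=1..N. ln \<bar>sin (pi * (2 ^ n * \<xi> - \<xi>))\<bar>) / real N"
      unfolding ln_abs_sin_mersenne_eq sum_subtractf by (simp add: field_simps)
  qed
  ultimately show "(\<lambda>N. (\<Sum>n=1..N. ln \<bar>sin (pi * (2 ^ n * \<xi> - \<xi>))\<bar>) / real N) \<longlonglongrightarrow> - ln 2"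
    by (auto intro: Lim_transform_eventually)
qed

theorem theorem3p2:
  shows "(\<exists>C1 C2::real. 0 < C1 \<and> C1 < C2 \<and>
           (\<forall>\<^sub>F \<delta> in at_right 0.
              C1 * \<delta> * \<bar>ln \<delta>\<bar> \<le> omega1 logsin \<delta> \<and>
              omega1 logsin \<delta> \<le> C2 * \<delta> * \<bar>ln \<delta>\<bar>))
       \<and> (AE \<xi> in lborel.
           (\<lambda>N. (\<Sum>n=1..N. ln \<bar>sin (pi * (2 ^ n * \<xi> - \<xi>))\<bar>) / real N)
             \<longlonglongrightarrow> - ln 2)"
proof
  show "\<exists>C1 C2::real. 0 < C1 \<and> C1 < C2 \<and>
      (\<forall>\<^sub>F \<delta> in at_right 0. C1 * \<delta> * \<bar>ln \<delta>\<bar> \<le> omega1 logsin \<delta> \<and> omega1 logsin \<delta> \<le> C2 * \<delta> * \<bar>ln \<delta>\<bar>)"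
    using omega1_logsin_asymptotic_bounds by (intro exI[of _ "1/8"] exI[of _ 24]) simp
qed (rule AE_ln_abs_sin_mersenne_averages)

end
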